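(* Let $G$ be a countably infinite group and $C<G$ a finite cyclic subgroup of prime order, with normalizer $N(C)=\{g\in G: gCg^{-1}=C\}$. Let $(K,\kappa)$ be a nontrivial standard probability space. If $G/N(C)$ is infinite, then the action $G\curvearrowright (K^{G/C},\kappa^{G/C})$ is essentially free.
   Context: $(K^{G/C},\kappa^{G/C})$ is the product space of maps $x:G/C\to K$ with product measure, and $G$ acts by $(gx)(fC)=x(g^{-1}fC)$ (the generalized Bernoulli shift over $G/C$). Nontrivial means $\kappa$ is not concentrated on a single point. Essentially free means that for every $g\ne e$, the set $\{x: gx=x\}$ has measure zero. *)

theory Defs
  imports "HOL-Algebra.Group_Action" "HOL-Algebra.Elementary_Groups" "HOL-Algebra.Left_Coset"
          "HOL-Probability.Probability"
begin

definition gen_shift :: "('a, 'b) monoid_scheme \<Rightarrow> 'a set \<Rightarrow> 'a \<Rightarrow> ('a set \<Rightarrow> 'k) \<Rightarrow> ('a set \<Rightarrow> 'k)"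
  where "gen_shift G C g x = (\<lambda>A \<in> lcosets\<^bsub>G\<^esub> C. x (inv\<^bsub>G\<^esub> g <#\<^bsub>G\<^esub> A))"

definition shift_space :: "('a, 'b) monoid_scheme \<Rightarrow> 'a set \<Rightarrow> 'k measure \<Rightarrow> ('a set \<Rightarrow> 'k) measure"
  where "shift_space G C M = PiM (lcosets\<^bsub>G\<^esub> C) (\<lambda>_. M)"

end

theory Submission
  imports Defs
begin

text \<open>An element k fixes the coset fC iff f\<inverse>kf \<in> C. Because C has prime order, any h
  conjugating a nontrivial element of C back into C normalizes C; hence for k \<noteq> 1 all cosets
  fixed by k lie in a single coset of N(C), and since G/N(C) is infinite, k moves infinitely
  many points of G/C. Take k = g\<inverse> for g \<noteq> 1. A configuration fixed by g must then agree on n pairwise disjoint pairs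
  {A, g\<inverse>A} of moved cosets. The coordinates are i.i.d., so this has probability p^n, where
  p < 1 is the probability that two independent \<kappa>-samples coincide; as n \<rightarrow> \<infinity> the set of
  fixed points is null.\<close>

lemma (in group) mult_inv_cancel [simp]:
  "x \<in> carrier G \<Longrightarrow> y \<in> carrier G \<Longrightarrow> x \<otimes> (inv x \<otimes> y) = y"
  by (simp add: m_assoc[symmetric])

lemma (in group) inv_mult_cancel [simp]:
  "x \<in> carrier G \<Longrightarrow> y \<in> carrier G \<Longrightarrow> inv x \<otimes> (x \<otimes> y) = y"
  by (simp add: m_assoc[symmetric])

lemma (in group) prime_card_subgroup_subset:
  assumes C: "subgroup C G" "finite C" "prime (card C)"
    and H: "subgroup H G" and c: "c \<in> C" "c \<in> H" "c \<noteq> \<one>"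
  shows "C \<subseteq> H"
proof -
  interpret C: group "G\<lparr>carrier := C\<rparr>" using C(1) by (rule subgroup_imp_group)
  have "subgroup (C \<inter> H) (G\<lparr>carrier := C\<rparr>)"
    using subgroup_incl[OF subgroups_Inter_pair[OF C(1) H] C(1)] by blast
  then have "card (C \<inter> H) dvd Coset.order (G\<lparr>carrier := C\<rparr>)"
    by (metis C.lagrange dvd_triv_right)
  then have "card (C \<inter> H) dvd card C"
    by (simp add: Coset.order_def)
  moreover have "{\<one>, c} \<subseteq> C \<inter> H"
    using c C(1) H by (auto intro: subgroup.one_closed)
  then have "2 \<le> card (C \<inter> H)"
    using c(3) C(2) card_mono[of "C \<inter> H" "{\<one>, c}"] by auto
  ultimately have "card (C \<inter> H) = card C"
    using C(3) unfolding prime_nat_iff by force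
  then have "C \<inter> H = C"
    using C(2) by (intro card_subset_eq) auto
  then show ?thesis by blast
qed

lemma (in group) conj_mem_imp_normalizer:
  assumes C: "subgroup C G" "finite C" "prime (card C)"
    and h: "h \<in> carrier G" and c: "c \<in> C" "c \<noteq> \<one>" "h \<otimes> c \<otimes> inv h \<in> C"
  shows "h \<in> normalizer G C"
proof -
  have Cc: "C \<subseteq> carrier G" using C(1) by (rule subgroup.subset)
  have cG: "c \<in> carrier G" using c Cc by blast
  have c_eq: "c = inv h \<otimes> (h \<otimes> c \<otimes> inv h) \<otimes> h"
    using h cG by (simp add: m_assoc)
  then have "c \<in> inv h <# C #> h"
    using c(3) unfolding l_coset_def r_coset_def by blast
  then have C_sub: "C \<subseteq> inv h <# C #> h"
    using prime_card_subgroup_subset[OF C subgroup_conjugation_is_surj1[OF h C(1)] c(1) _ c(2)] by blast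
  have "h \<otimes> c \<otimes> inv h \<in> h <# C #> inv h"
    using c(1) unfolding l_coset_def r_coset_def by blast
  moreover have "h \<otimes> c \<otimes> inv h \<noteq> \<one>"
    using c_eq c(2) h by auto
  ultimately have "C \<subseteq> h <# C #> inv h"
    using prime_card_subgroup_subset[OF C subgroup_conjugation_is_surj2[OF h C(1)] c(3)] by blast
  moreover have "h <# C #> inv h \<subseteq> C"
  proof -
    have "h <# C #> inv h \<subseteq> h <# (inv h <# C #> h) #> inv h"
      using C_sub unfolding l_coset_def r_coset_def by blast
    also have "\<dots> = C"
      using h Cc by (rule subgroup_conjugation_is_surj0)
    finally show ?thesis .
  qed
  ultimately show ?thesis
    using h Cc unfolding normalizer_def stabilizer_def by auto
qed

lemma (in group) lcos_fixed_imp_conj_mem: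
  assumes "subgroup C G" "f \<in> carrier G" "k \<in> carrier G" "k <# (f <# C) = f <# C"
  shows "inv f \<otimes> k \<otimes> f \<in> C"
proof -
  have "k <# (f <# C) = (k \<otimes> f) <# C"
    using assms by (simp add: lcos_m_assoc subgroup.subset)
  then have "k \<otimes> f \<in> f <# C"
    using assms lcos_self[of "k \<otimes> f" C] by simp
  then show ?thesis
    using subgroup.lcos_module_imp[OF assms(1) is_group assms(2)] assms by (simp add: m_assoc)
qed

lemma (in group) fixed_lcosets_in_normalizer_lcos:
  assumes C: "subgroup C G" "finite C" "prime (card C)"
    and k: "k \<in> carrier G" "k \<noteq> \<one>"
    and f0: "f0 \<in> carrier G" "k <# (f0 <# C) = f0 <# C"
    and f: "f \<in> carrier G" "k <# (f <# C) = f <# C"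
  shows "f \<in> f0 <# normalizer G C"
proof -
  define h where "h = inv f0 \<otimes> f"
  have h: "h \<in> carrier G" using f0 f by (simp add: h_def)
  have c: "inv f \<otimes> k \<otimes> f \<in> C" and c0: "inv f0 \<otimes> k \<otimes> f0 \<in> C"
    using lcos_fixed_imp_conj_mem[OF C(1) f(1) k(1) f(2)]
      lcos_fixed_imp_conj_mem[OF C(1) f0(1) k(1) f0(2)] by auto
  have "k = f \<otimes> (inv f \<otimes> k \<otimes> f) \<otimes> inv f"
    using k f by (simp add: m_assoc)
  then have c_nontriv: "inv f \<otimes> k \<otimes> f \<noteq> \<one>"
    using k f by auto
  have "h \<otimes> (inv f \<otimes> k \<otimes> f) \<otimes> inv h = inv f0 \<otimes> k \<otimes> f0"
    using f0 f k by (simp add: h_def inv_mult_group m_assoc)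
  then have "h \<in> normalizer G C"
    using conj_mem_imp_normalizer[OF C h c c_nontriv] c0 by simp
  moreover have "f = f0 \<otimes> h"
    using f0 f by (simp add: h_def)
  ultimately show ?thesis
    unfolding l_coset_def by blast
qed

lemma (in group) lcosets_finite_if_cofinite:
  assumes N: "subgroup N G" and a: "a \<in> carrier G" and fin: "finite (carrier G - (a <# N))"
  shows "finite (lcosets N)"
proof -
  have "lcosets N \<subseteq> insert (a <# N) (Pow (carrier G - (a <# N)))"
  proof
    fix B assume B: "B \<in> lcosets N"
    have "a <# N \<in> lcosets N" using a unfolding LCOSETS_def by blast
    then have "B \<noteq> a <# N \<Longrightarrow> B \<inter> (a <# N) = {}"
      using lcos_disjoint[OF N B] by blast
    moreover have "B \<subseteq> carrier G"
      using B lcosets_subset_PowG[OF N] by blast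
    ultimately show "B \<in> insert (a <# N) (Pow (carrier G - (a <# N)))" by blast
  qed
  then show ?thesis
    using fin by (meson finite_Pow_iff finite_insert finite_subset)
qed

lemma (in group) infinite_moved_lcosets:
  assumes C: "subgroup C G" "finite C" "prime (card C)"
    and k: "k \<in> carrier G" "k \<noteq> \<one>"
    and N_inf: "infinite (lcosets (normalizer G C))"
  shows "infinite {A \<in> lcosets C. k <# A \<noteq> A}"
proof
  let ?N = "normalizer G C" and ?S = "{A \<in> lcosets C. k <# A \<noteq> A}"
  assume "finite ?S"
  moreover have "finite A" if "A \<in> lcosets C" for A
    using that C(2) unfolding LCOSETS_def l_coset_def by auto
  ultimately have fin_US: "finite (\<Union>?S)" by blast
  obtain f0 where f0: "f0 \<in> carrier G"
    and fixed: "\<And>f. f \<in> carrier G \<Longrightarrow> k <# (f <# C) = f <# C \<Longrightarrow> f \<in> f0 <# ?N"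
  proof (cases "\<exists>f0 \<in> carrier G. k <# (f0 <# C) = f0 <# C")
    case True
    then show ?thesis using that fixed_lcosets_in_normalizer_lcos[OF C k] by blast
  next
    case False
    then show ?thesis using that[OF one_closed] by blast
  qed
  have "carrier G - (f0 <# ?N) \<subseteq> \<Union>?S"
  proof
    fix f assume f: "f \<in> carrier G - (f0 <# ?N)"
    then have "f <# C \<in> ?S"
      using fixed unfolding LCOSETS_def by blast
    moreover have "f \<in> f <# C"
      using f C(1) lcos_self by blast
    ultimately show "f \<in> \<Union>?S" by blast
  qed
  then have "finite (lcosets ?N)"
    using lcosets_finite_if_cofinite[OF normalizer_imp_subgroup f0] fin_US finite_subset C(1)
    by (meson subgroup.subset)
  then show False using N_inf by contradiction
qed

lemma (in group) lcos_in_lcosets: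
  assumes "subgroup C G" "g \<in> carrier G" "A \<in> lcosets C"
  shows "g <# A \<in> lcosets C"
proof -
  obtain f where f: "f \<in> carrier G" "A = f <# C"
    using assms(3) unfolding LCOSETS_def by blast
  then have "g <# A = (g \<otimes> f) <# C"
    using assms by (simp add: lcos_m_assoc subgroup.subset)
  then show ?thesis
    using assms(2) f(1) unfolding LCOSETS_def by auto
qed

lemma (in group) inj_on_lcos_lcosets:
  assumes "subgroup C G" "g \<in> carrier G"
  shows "inj_on (\<lambda>A. g <# A) (lcosets C)"
proof (rule inj_on_inverseI)
  fix A assume "A \<in> lcosets C"
  then have "A \<subseteq> carrier G"
    using lcosets_subset_PowG[OF assms(1)] by blast
  then show "inv g <# (g <# A) = A"
    using assms(2) by (simp add: lcos_m_assoc lcos_mult_one)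
qed

definition coincidence_prob :: "'a measure \<Rightarrow> real" where
  "coincidence_prob M = measure (M \<Otimes>\<^sub>M M) {z \<in> space (M \<Otimes>\<^sub>M M). fst z = snd z}"

lemma sets_pair_measure_diagonal:
  fixes M :: "'a::{second_countable_topology, t2_space} measure"
  assumes "sets M = sets borel"
  shows "{z \<in> space (M \<Otimes>\<^sub>M M). fst z = snd z} \<in> sets (M \<Otimes>\<^sub>M M)"
proof -
  have "fst \<in> borel_measurable (M \<Otimes>\<^sub>M M)" "snd \<in> borel_measurable (M \<Otimes>\<^sub>M M)"
    using measurable_fst measurable_snd measurable_cong_sets[OF refl assms] by blast+
  then show ?thesis by (rule measurable_equality_set)
qed

lemma coincidence_prob_less_one:
  fixes M :: "'a::{second_countable_topology, t2_space} measure"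
  assumes M: "prob_space M" and borel: "sets M = sets borel"
    and no_atom: "\<not> (\<exists>k. emeasure M {k} = 1)"
  shows "coincidence_prob M < 1"
proof -
  interpret prob_space M by fact
  interpret MM: pair_prob_space M M by unfold_locales
  define D where "D = {z \<in> space (M \<Otimes>\<^sub>M M). fst z = snd z}"
  have D: "D \<in> sets (M \<Otimes>\<^sub>M M)"
    unfolding D_def using borel by (rule sets_pair_measure_diagonal)
  have slice: "Pair x -` D = {x}" if "x \<in> space M" for x
    using that unfolding D_def by (auto simp: space_pair_measure)
  have atom_meas: "(\<lambda>x. emeasure M {x}) \<in> borel_measurable M"
    using measurable_emeasure_Pair[OF D] by (rule measurable_cong[THEN iffD1, rotated]) (simp add: slice)
  have "emeasure (M \<Otimes>\<^sub>M M) D = (\<integral>\<^sup>+x. emeasure M {x} \<partial>M)"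
    using emeasure_pair_measure_alt[OF D] by (simp add: slice cong: nn_integral_cong)
  moreover have "(\<integral>\<^sup>+x. emeasure M {x} \<partial>M) \<noteq> 1"
  proof
    assume one: "(\<integral>\<^sup>+x. emeasure M {x} \<partial>M) = 1"
    have "(\<integral>\<^sup>+x. (1 - emeasure M {x}) \<partial>M) = (\<integral>\<^sup>+x. 1 \<partial>M) - (\<integral>\<^sup>+x. emeasure M {x} \<partial>M)"
      by (rule nn_integral_diff) (auto simp: atom_meas one intro!: AE_I2 emeasure_le_1)
    also have "\<dots> = 0" using one by (simp add: emeasure_space_1)
    finally have "AE x in M. 1 - emeasure M {x} = 0"
      using atom_meas by (subst nn_integral_0_iff_AE[symmetric]) auto
    then have "AE x in M. False"
    proof (rule AE_mp, intro AE_I2 impI)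
      fix x assume "1 - emeasure M {x} = 0"
      then have "emeasure M {x} = 1"
        using emeasure_le_1[of "{x}"] by (simp add: diff_eq_0_iff_ennreal)
      then show False using no_atom by blast
    qed
    then show False by simp
  qed
  ultimately have "measure (M \<Otimes>\<^sub>M M) D \<noteq> 1"
    by (auto simp: MM.emeasure_eq_measure)
  then show ?thesis
    using MM.prob_le_1[of D] unfolding coincidence_prob_def D_def by linarith
qed

lemma indep_vars_PiM_components:
  assumes M: "\<And>i. i \<in> I \<Longrightarrow> prob_space (M i)" and I: "I \<noteq> {}"
  shows "prob_space.indep_vars (PiM I M) M (\<lambda>i x. x i) I"
proof -
  interpret P: prob_space "PiM I M" using M by (rule prob_space_PiM)
  have "distr (PiM I M) (PiM I M) (\<lambda>x. \<lambda>i\<in>I. x i) = distr (PiM I M) (PiM I M) (\<lambda>x. x)"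
    by (rule distr_cong) (auto simp: space_PiM PiE_def extensional_restrict)
  also have "\<dots> = PiM I (\<lambda>i. distr (PiM I M) (M i) (\<lambda>x. x i))"
    unfolding distr_id by (rule PiM_cong[OF refl]) (simp add: M distr_PiM_component)
  finally show ?thesis
    using I by (subst P.indep_vars_iff_distr_eq_PiM') auto
qed

lemma prob_PiM_components_eq:
  fixes M :: "'a::{second_countable_topology, t2_space} measure"
  assumes M: "prob_space M" and borel: "sets M = sets borel"
    and ab: "a \<in> I" "b \<in> I" "a \<noteq> b"
  shows "measure (PiM I (\<lambda>_. M)) {x \<in> space (PiM I (\<lambda>_. M)). x a = x b} = coincidence_prob M"
proof -
  define P where "P = PiM I (\<lambda>_. M)"
  interpret P: prob_space P unfolding P_def using M by (rule prob_space_PiM)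
  have "P.indep_vars (\<lambda>_. M) (\<lambda>i x. x i) I"
    unfolding P_def using indep_vars_PiM_components[of I "\<lambda>_. M"] M ab by auto
  then have "P.indep_var (PiM {a} (\<lambda>_. M)) (\<lambda>x. restrict (\<lambda>i. x i) {a}) (PiM {b} (\<lambda>_. M)) (\<lambda>x. restrict (\<lambda>i. x i) {b})"
    using ab by (intro P.indep_var_restrict) auto
  then have "P.indep_var M ((\<lambda>y. y a) \<circ> (\<lambda>x. restrict (\<lambda>i. x i) {a})) M ((\<lambda>y. y b) \<circ> (\<lambda>x. restrict (\<lambda>i. x i) {b}))"
    by (rule P.indep_var_compose) (auto intro: measurable_component_singleton)
  then have indep: "P.indep_var M (\<lambda>x. x a) M (\<lambda>x. x b)"
    by (simp add: comp_def)
  have "distr P M (\<lambda>x. x a) = M" "distr P M (\<lambda>x. x b) = M"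
    unfolding P_def using M ab by (auto intro: distr_PiM_component)
  then have joint: "distr P (M \<Otimes>\<^sub>M M) (\<lambda>x. (x a, x b)) = M \<Otimes>\<^sub>M M"
    using indep unfolding P.indep_var_distribution_eq by simp
  define D where "D = {z \<in> space (M \<Otimes>\<^sub>M M). fst z = snd z}"
  have "(\<lambda>x. (x a, x b)) \<in> measurable P (M \<Otimes>\<^sub>M M)"
    unfolding P_def using ab by measurable
  moreover have "D \<in> sets (M \<Otimes>\<^sub>M M)"
    unfolding D_def using borel by (rule sets_pair_measure_diagonal)
  ultimately have "measure (distr P (M \<Otimes>\<^sub>M M) (\<lambda>x. (x a, x b))) D = P.prob ((\<lambda>x. (x a, x b)) -` D \<inter> space P)"
    by (rule measure_distr)
  then have "coincidence_prob M = P.prob ((\<lambda>x. (x a, x b)) -` D \<inter> space P)"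
    unfolding coincidence_prob_def joint D_def .
  also have "(\<lambda>x. (x a, x b)) -` D \<inter> space P = {x \<in> space P. x a = x b}"
    using ab by (auto simp: D_def space_pair_measure P_def space_PiM)
  finally show ?thesis unfolding P_def ..
qed

lemma sets_PiM_coincidences:
  fixes M :: "'a::{second_countable_topology, t2_space} measure"
  assumes borel: "sets M = sets borel" and J: "countable J"
    and ab: "\<And>j. j \<in> J \<Longrightarrow> a j \<in> I \<and> b j \<in> I"
  shows "{x \<in> space (PiM I (\<lambda>_. M)). \<forall>j\<in>J. x (a j) = x (b j)} \<in> sets (PiM I (\<lambda>_. M))"
proof (cases "J = {}")
  case False
  have component: "(\<lambda>x. x i) \<in> borel_measurable (PiM I (\<lambda>_. M))" if "i \<in> I" for i
    using measurable_component_singleton[OF that] measurable_cong_sets[OF refl borel] by blast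
  have "{x \<in> space (PiM I (\<lambda>_. M)). \<forall>j\<in>J. x (a j) = x (b j)}
      = (\<Inter>j\<in>J. {x \<in> space (PiM I (\<lambda>_. M)). x (a j) = x (b j)})"
    using False by auto
  also have "\<dots> \<in> sets (PiM I (\<lambda>_. M))"
    using J False ab component by (intro sets.countable_INT') (auto intro: measurable_equality_set)
  finally show ?thesis .
qed simp

lemma prob_PiM_disjoint_coincidences:
  fixes M :: "'a::{second_countable_topology, t2_space} measure" and I :: "'i set" and J :: "'j set"
  assumes M: "prob_space M" and borel: "sets M = sets borel" and J: "finite J"
    and ab: "\<And>j. j \<in> J \<Longrightarrow> a j \<in> I \<and> b j \<in> I \<and> a j \<noteq> b j"
    and disj: "disjoint_family_on (\<lambda>j. {a j, b j}) J"
  shows "measure (PiM I (\<lambda>_. M)) {x \<in> space (PiM I (\<lambda>_. M)). \<forall>j\<in>J. x (a j) = x (b j)}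
           = coincidence_prob M ^ card J"
proof -
  define P where "P = PiM I (\<lambda>_. M)"
  interpret P: prob_space P unfolding P_def using M by (rule prob_space_PiM)
  show ?thesis
  proof (cases "J = {}")
    case True
    then show ?thesis unfolding P_def[symmetric] by (simp add: P.prob_space)
  next
    case False
    define K where "K = (\<lambda>j. {a j, b j})"
    define X :: "'j \<Rightarrow> ('i \<Rightarrow> 'a) \<Rightarrow> 'i \<Rightarrow> 'a" where "X = (\<lambda>j x. restrict (\<lambda>i. x i) (K j))"
    define T where "T = (\<lambda>j. {y \<in> space (PiM (K j) (\<lambda>_. M)). y (a j) = y (b j)})"
    have "P.indep_vars (\<lambda>_. M) (\<lambda>i x. x i) I"
      unfolding P_def using indep_vars_PiM_components[of I "\<lambda>_. M"] M False ab by auto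
    then have indep: "P.indep_vars (\<lambda>j. PiM (K j) (\<lambda>_. M)) X J"
      unfolding X_def using ab disj by (intro P.indep_vars_restrict) (auto simp: K_def)
    have T: "T j \<in> sets (PiM (K j) (\<lambda>_. M))" for j
      using sets_PiM_coincidences[OF borel, of "{j}" a "K j" b] by (simp add: T_def K_def)
    have event: "X j -` T j \<inter> space P = {x \<in> space P. x (a j) = x (b j)}" if "j \<in> J" for j
      using ab[OF that] by (auto simp: X_def T_def K_def P_def space_PiM PiE_iff extensional_def)
    have "{x \<in> space P. \<forall>j\<in>J. x (a j) = x (b j)} = (\<Inter>j\<in>J. X j -` T j \<inter> space P)"
      using False by (auto simp: event)
    also have "P.prob \<dots> = (\<Prod>j\<in>J. P.prob (X j -` T j \<inter> space P))"
      using indep False J T by (intro P.indep_varsD) auto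
    also have "\<dots> = (\<Prod>j\<in>J. coincidence_prob M)"
    proof (rule prod.cong[OF refl])
      fix j assume j: "j \<in> J"
      show "P.prob (X j -` T j \<inter> space P) = coincidence_prob M"
        unfolding event[OF j] unfolding P_def using ab[OF j] M borel by (intro prob_PiM_components_eq) auto
    qed
    finally show ?thesis unfolding P_def by simp
  qed
qed

lemma disjoint_pairs_in_infinite_set:
  fixes n :: nat
  assumes S: "infinite S" and inj: "inj_on \<tau> S"
  shows "\<exists>a. a ` {..<n} \<subseteq> S \<and> disjoint_family_on (\<lambda>j. {a j, \<tau> (a j)}) {..<n}"
proof (induction n)
  case (Suc n)
  then obtain a where a: "a ` {..<n} \<subseteq> S" and disj: "disjoint_family_on (\<lambda>j. {a j, \<tau> (a j)}) {..<n}"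
    by blast
  let ?U = "\<Union>j<n. {a j, \<tau> (a j)}"
  have "finite (?U \<union> (\<tau> -` ?U \<inter> S))"
    using inj by (auto intro: finite_vimage_IntI)
  then have "infinite (S - (?U \<union> (\<tau> -` ?U \<inter> S)))"
    using S by (rule Diff_infinite_finite)
  then obtain b where b: "b \<in> S" "b \<notin> ?U \<union> (\<tau> -` ?U \<inter> S)"
    using infinite_imp_nonempty by blast
  define a' where "a' = a(n := b)"
  have "{a' n, \<tau> (a' n)} \<inter> (\<Union>j<n. {a' j, \<tau> (a' j)}) = {}"
    using b by (auto simp: a'_def)
  moreover have "disjoint_family_on (\<lambda>j. {a' j, \<tau> (a' j)}) {..<n}"
    using disj by (auto simp: a'_def disjoint_family_on_def)
  ultimately have "disjoint_family_on (\<lambda>j. {a' j, \<tau> (a' j)}) {..<Suc n}"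
    by (simp add: lessThan_Suc disjoint_family_on_insert)
  moreover have "a' ` {..<Suc n} \<subseteq> S"
    using a b(1) by (auto simp: a'_def lessThan_Suc)
  ultimately show ?case by blast
qed (simp add: disjoint_family_on_def)

lemma prob_PiM_invariant_le_coincidence_prob_power:
  fixes M :: "'a::{second_countable_topology, t2_space} measure" and I :: "'i set"
  assumes M: "prob_space M" and borel: "sets M = sets borel"
    and \<tau>: "\<tau> ` I \<subseteq> I" "inj_on \<tau> I" and moved: "infinite {i \<in> I. \<tau> i \<noteq> i}"
  shows "measure (PiM I (\<lambda>_. M)) {x \<in> space (PiM I (\<lambda>_. M)). \<forall>i\<in>I. x (\<tau> i) = x i}
           \<le> coincidence_prob M ^ n"
proof -
  define P where "P = PiM I (\<lambda>_. M)"
  interpret P: prob_space P unfolding P_def using M by (rule prob_space_PiM)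
  have "inj_on \<tau> {i \<in> I. \<tau> i \<noteq> i}"
    using \<tau>(2) by (rule inj_on_subset) blast
  then obtain a where a: "a ` {..<n} \<subseteq> {i \<in> I. \<tau> i \<noteq> i}"
    and disj: "disjoint_family_on (\<lambda>j. {a j, \<tau> (a j)}) {..<n}"
    using disjoint_pairs_in_infinite_set[OF moved] by blast
  have pairs: "a j \<in> I \<and> \<tau> (a j) \<in> I \<and> a j \<noteq> \<tau> (a j)" if "j \<in> {..<n}" for j
  proof -
    have "a j \<in> I" "\<tau> (a j) \<noteq> a j"
      using that a by auto
    then show ?thesis
      using \<tau>(1) by (blast dest: not_sym)
  qed
  define E where "E = {x \<in> space P. \<forall>j\<in>{..<n}. x (a j) = x (\<tau> (a j))}"
  have "{x \<in> space P. \<forall>i\<in>I. x (\<tau> i) = x i} \<subseteq> E"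
    using a unfolding E_def image_subset_iff by fastforce
  moreover have "E \<in> sets P"
    unfolding E_def P_def
    by (rule sets_PiM_coincidences[OF borel countable_finite[OF finite_lessThan]]) (use pairs in blast)
  ultimately have "P.prob {x \<in> space P. \<forall>i\<in>I. x (\<tau> i) = x i} \<le> P.prob E"
    by (rule P.finite_measure_mono)
  also have "P.prob E = coincidence_prob M ^ n"
    unfolding E_def P_def
    using prob_PiM_disjoint_coincidences[OF M borel finite_lessThan pairs disj] by simp
  finally show ?thesis unfolding P_def .
qed

lemma null_sets_PiM_invariant:
  fixes M :: "'a::{second_countable_topology, t2_space} measure" and I :: "'i set"
  assumes M: "prob_space M" and borel: "sets M = sets borel"
    and no_atom: "\<not> (\<exists>k. emeasure M {k} = 1)"
    and I: "countable I" and \<tau>: "\<tau> ` I \<subseteq> I" "inj_on \<tau> I"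
    and moved: "infinite {i \<in> I. \<tau> i \<noteq> i}"
  shows "{x \<in> space (PiM I (\<lambda>_. M)). \<forall>i\<in>I. x (\<tau> i) = x i} \<in> null_sets (PiM I (\<lambda>_. M))"
proof -
  define P where "P = PiM I (\<lambda>_. M)"
  define Fix where "Fix = {x \<in> space P. \<forall>i\<in>I. x (\<tau> i) = x i}"
  define p where "p = coincidence_prob M"
  interpret P: prob_space P unfolding P_def using M by (rule prob_space_PiM)
  have Fix: "Fix \<in> sets P"
    unfolding Fix_def P_def
    by (rule sets_PiM_coincidences[OF borel I, where a=\<tau> and b="\<lambda>i. i"]) (use \<tau>(1) in auto)
  have "(\<lambda>n. p ^ n) \<longlonglongrightarrow> 0"
    using coincidence_prob_less_one[OF M borel no_atom] measure_nonneg
    unfolding p_def coincidence_prob_def by (intro LIMSEQ_power_zero) simp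
  then have "P.prob Fix \<le> 0"
    using prob_PiM_invariant_le_coincidence_prob_power[OF M borel \<tau> moved]
    unfolding Fix_def P_def p_def by (intro LIMSEQ_le_const) auto
  then have "emeasure P Fix = 0"
    by (simp add: P.emeasure_eq_measure measure_le_0_iff)
  then show ?thesis
    using Fix unfolding Fix_def P_def by (simp add: null_sets_def)
qed

theorem lemma5p1:
  fixes G :: "('a, 'b) monoid_scheme" and C :: "'a set" and M :: "'k::polish_space measure"
  assumes "group G"
    and "countable (carrier G)" and "infinite (carrier G)"
    and "subgroup C G" and "finite C"
    and "cyclic_group (G\<lparr>carrier := C\<rparr>)"
    and "prime (card C)"
    and "prob_space M" and "sets M = sets borel"
    and "\<not> (\<exists>k. emeasure M {k} = 1)"
    and "infinite (lcosets\<^bsub>G\<^esub> (normalizer G C))"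
  shows "\<forall>g \<in> carrier G. g \<noteq> \<one>\<^bsub>G\<^esub> \<longrightarrow>
           {x \<in> space (shift_space G C M). gen_shift G C g x = x} \<in> null_sets (shift_space G C M)"
proof (intro ballI impI)
  interpret group G by fact
  fix g assume g: "g \<in> carrier G" "g \<noteq> \<one>\<^bsub>G\<^esub>"
  let ?\<tau> = "\<lambda>A. inv\<^bsub>G\<^esub> g <#\<^bsub>G\<^esub> A"
  have "{x \<in> space (shift_space G C M). gen_shift G C g x = x}
      = {x \<in> space (PiM (lcosets\<^bsub>G\<^esub> C) (\<lambda>_. M)). \<forall>A \<in> lcosets\<^bsub>G\<^esub> C. x (?\<tau> A) = x A}"
    unfolding shift_space_def gen_shift_def
    by (auto simp: fun_eq_iff space_PiM PiE_def extensional_def)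
  also have "\<dots> \<in> null_sets (PiM (lcosets\<^bsub>G\<^esub> C) (\<lambda>_. M))"
  proof (rule null_sets_PiM_invariant)
    show "countable (lcosets\<^bsub>G\<^esub> C)"
      using assms(2) unfolding LCOSETS_def by blast
    show "?\<tau> ` (lcosets\<^bsub>G\<^esub> C) \<subseteq> lcosets\<^bsub>G\<^esub> C" "inj_on ?\<tau> (lcosets\<^bsub>G\<^esub> C)"
      using lcos_in_lcosets inj_on_lcos_lcosets assms(4) g(1) by auto
    have "inv\<^bsub>G\<^esub> g \<noteq> \<one>\<^bsub>G\<^esub>"
      using g by (metis inv_inv one_closed inv_one)
    then show "infinite {A \<in> lcosets\<^bsub>G\<^esub> C. ?\<tau> A \<noteq> A}"
      using infinite_moved_lcosets assms(4,5,7,11) g(1) by blast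
  qed (fact assms)+
  finally show "{x \<in> space (shift_space G C M). gen_shift G C g x = x} \<in> null_sets (shift_space G C M)"
    unfolding shift_space_def .
qed

end
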